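(* Fix $k\in[n]$ and vectors $\delta_i\in\mathbb{R}^n$ for $i\neq k$. Let $(W,P)$ be the stable point for the positions $M+\Delta_0$, where $\Delta_0e_i=\delta_i$ for $i\ne k$ and $\Delta_0e_k=0$, and let $(W',P')$ be the stable point for $M+\Delta_1$, where $\Delta_1e_i=\delta_i$ for $i\neq k$ and $\Delta_1e_k=\delta_k\in\mathbb{R}^n$. Let $\Gamma^{-1/2}\Sigma\Gamma^{-1/2}=V\Lambda V^T$ be an eigendecomposition with $V$ orthogonal and $\Lambda=\mathrm{diag}(\lambda_1,\dots,\lambda_n)$, $\lambda_i>0$. Define the symmetric matrix $A\in\mathbb{R}^{n\times n}$ by $$A_{ii}=\frac{V_{ki}^2}{4\lambda_i}+\sum_{\ell=1}^n\frac{V_{k\ell}^2}{2(\lambda_i+\lambda_\ell)},\qquad A_{ij}=\frac{V_{ki}V_{kj}}{2(\lambda_i+\lambda_j)}\ (i\neq j),$$ and $B=\gamma_k^{-1}\Gamma^{-1/2}VAV^T\Gamma^{-1/2}$. Then $W'e_k=We_k+B\delta_k$.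
   Context: Fix agents $[n]=\{1,\dots,n\}$. Let $\Sigma\in\mathbb{R}^{n\times n}$ be symmetric positive definite, $\Gamma=\mathrm{diag}(\gamma_1,\dots,\gamma_n)$ with all $\gamma_i>0$, and let $M\in\mathbb{R}^{n\times n}$ be the matrix of true beliefs. For a matrix of reported negotiating positions $M'\in\mathbb{R}^{n\times n}$, the stable point for $M'$ is the unique pair $(W,P)$ of real $n\times n$ matrices with $W=W^T$, $P^T=-P$ and $M'-P=2\Sigma W\Gamma$; equivalently $\mathrm{vec}(W)=\tfrac12(\Gamma\otimes\Sigma+\Sigma\otimes\Gamma)^{-1}\mathrm{vec}(M'+M'^T)$ and $P=M'-2\Sigma W\Gamma$. Here $\mathrm{vec}$ stacks columns and $e_i$ is the $i$-th standard basis vector. *)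

theory Defs
  imports "HOL-Analysis.Analysis"
begin

definition diagm :: "real ^ 'n \<Rightarrow> real ^ 'n ^ 'n" where
  "diagm v = (\<chi> i j. if i = j then v $ i else 0)"

definition is_stable_point ::
  "real ^ 'n ^ 'n \<Rightarrow> real ^ 'n \<Rightarrow> real ^ 'n ^ 'n \<Rightarrow> real ^ 'n ^ 'n \<Rightarrow> real ^ 'n ^ 'n \<Rightarrow> bool" where
  "is_stable_point Sig gamma M' W P \<longleftrightarrow>
     transpose W = W \<and> transpose P = - P \<and> M' - P = 2 *\<^sub>R (Sig ** W ** diagm gamma)"

definition Amat :: "real ^ 'n ^ 'n \<Rightarrow> real ^ 'n \<Rightarrow> 'n \<Rightarrow> real ^ 'n ^ 'n" where
  "Amat V lam k = (\<chi> i j. if i = j then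
        (V $ k $ i)^2 / (4 * lam $ i) + (\<Sum>l\<in>UNIV. (V $ k $ l)^2 / (2 * (lam $ i + lam $ l)))
      else (V $ k $ i) * (V $ k $ j) / (2 * (lam $ i + lam $ j)))"

end

theory Submission
  imports Defs
begin

text \<open>Subtracting the two stable-point equations and adding the transpose removes the skew
  parts: the change \<open>X = W' - W\<close> solves the Lyapunov equation
  \<open>\<Sigma> X \<Gamma> + \<Gamma> X \<Sigma> = (D + D\<^sup>T) / 2\<close> with \<open>D = \<delta>\<^sub>k e\<^sub>k\<^sup>T\<close>.
  In the coordinates \<open>Z = V\<^sup>T \<Gamma>^(1/2) X \<Gamma>^(1/2) V\<close> it becomes \<open>\<Lambda> Z + Z \<Lambda> = E\<close>,
  which is solved entrywise by \<open>Z\<^sub>a\<^sub>b = E\<^sub>a\<^sub>b / (\<lambda>\<^sub>a + \<lambda>\<^sub>b)\<close>. The right-hand side \<open>E\<close>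
  has rank two, spanned by \<open>u = V\<^sup>T \<Gamma>^(-1/2) \<delta>\<^sub>k\<close> and the \<open>k\<close>-th row of \<open>V\<close>, and
  reading off column \<open>k\<close> of \<open>X\<close> yields \<open>A u\<close>.\<close>

lemma matrix_add_rdistrib: "((A::real^'n^'m) + B) ** C = A ** C + B ** C"
  by (simp add: matrix_matrix_mult_def vec_eq_iff sum.distrib algebra_simps)

lemma matrix_diff_ldistrib: "(A::real^'n^'m) ** (B - C) = A ** B - A ** C"
  by (simp add: matrix_matrix_mult_def vec_eq_iff sum_subtractf algebra_simps)

lemma matrix_diff_rdistrib: "((A::real^'n^'m) - B) ** C = A ** C - B ** C"
  by (simp add: matrix_matrix_mult_def vec_eq_iff sum_subtractf algebra_simps)

lemma transpose_add: "transpose ((A::real^'n^'m) + B) = transpose A + transpose B"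
  by (simp add: transpose_def vec_eq_iff)

lemma diagm_mult_matrix_nth: "(diagm x ** A) $ i $ j = x $ i * (A::real^'m^'n) $ i $ j"
  unfolding diagm_def matrix_matrix_mult_def by (simp add: if_distrib if_distribR cong: if_cong)

lemma matrix_mult_diagm_nth: "(A ** diagm x) $ i $ j = (A::real^'n^'m) $ i $ j * x $ j"
  unfolding diagm_def matrix_matrix_mult_def by (simp add: if_distrib if_distribR cong: if_cong)

lemma diagm_mult_vector_nth: "(diagm x *v y) $ i = x $ i * y $ i"
  unfolding diagm_def matrix_vector_mult_def by (simp add: if_distrib if_distribR cong: if_cong)

lemma diagm_mult_diagm: "diagm x ** diagm y = diagm (\<chi> i. x $ i * y $ i)"
  by (simp add: vec_eq_iff diagm_mult_matrix_nth) (simp add: diagm_def)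

lemma transpose_diagm [simp]: "transpose (diagm x) = diagm x"
  by (simp add: transpose_def diagm_def vec_eq_iff)

lemma stable_point_symmetric_part:
  assumes "is_stable_point Sig gamma M' W P" and "transpose Sig = Sig"
  shows "M' + transpose M' = 2 *\<^sub>R (Sig ** W ** diagm gamma + diagm gamma ** W ** Sig)"
proof -
  from assms(1) have W: "transpose W = W" and P: "transpose P = - P"
    and M': "M' = P + 2 *\<^sub>R (Sig ** W ** diagm gamma)"
    by (auto simp: is_stable_point_def algebra_simps)
  have "transpose M' = - P + 2 *\<^sub>R (diagm gamma ** W ** Sig)"
    by (simp add: M' transpose_add transpose_scalar matrix_transpose_mul W P assms(2) matrix_mul_assoc)
  then show ?thesis
    by (simp add: M' scaleR_add_right)
qed

lemma stable_point_difference: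
  assumes "is_stable_point Sig gamma M0 W0 P0" and "is_stable_point Sig gamma M1 W1 P1"
    and "transpose Sig = Sig"
  shows "(M1 - M0) + transpose (M1 - M0)
    = 2 *\<^sub>R (Sig ** (W1 - W0) ** diagm gamma + diagm gamma ** (W1 - W0) ** Sig)"
proof -
  have "(M1 - M0) + transpose (M1 - M0) = (M1 + transpose M1) - (M0 + transpose M0)"
    by (simp add: vec_eq_iff transpose_def)
  also have "\<dots> = 2 *\<^sub>R (Sig ** W1 ** diagm gamma + diagm gamma ** W1 ** Sig)
      - 2 *\<^sub>R (Sig ** W0 ** diagm gamma + diagm gamma ** W0 ** Sig)"
    using assms by (simp add: stable_point_symmetric_part)
  finally show ?thesis
    by (simp add: matrix_diff_ldistrib matrix_diff_rdistrib algebra_simps)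
qed

lemma diagm_lyapunov_solution:
  assumes "E = diagm lam ** Z + Z ** diagm lam" and "lam $ a + lam $ b \<noteq> 0"
  shows "Z $ a $ b = E $ a $ b / (lam $ a + lam $ b)"
  using assms by (simp add: diagm_mult_matrix_nth matrix_mult_diagm_nth field_simps)

lemma lyapunov_solution:
  fixes Sig X C V :: "real^'n^'n" and gamma lam :: "real^'n"
  defines "H \<equiv> diagm (\<chi> i. 1 / sqrt (gamma $ i))"
  assumes gamma_pos: "\<And>i. gamma $ i > 0"
    and V: "orthogonal_matrix V"
    and lam_pos: "\<And>i. lam $ i > 0"
    and eig: "H ** Sig ** H = V ** diagm lam ** transpose V"
    and C: "C = Sig ** X ** diagm gamma + diagm gamma ** X ** Sig"
  shows "X = H ** V ** (\<chi> a b. (transpose V ** H ** C ** H ** V) $ a $ b / (lam $ a + lam $ b))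
               ** transpose V ** H"
proof -
  define R where "R = diagm (\<chi> i. sqrt (gamma $ i))"
  define G where "G = diagm gamma"
  define L where "L = diagm lam"
  define tV where "tV = transpose V"
  have HR: "H ** R = mat 1" "R ** H = mat 1"
    unfolding H_def R_def diagm_mult_diagm using gamma_pos
    by (auto simp: diagm_def mat_def vec_eq_iff less_imp_neq[symmetric])
  have GH: "G ** H = R" "H ** G = R"
    unfolding H_def R_def G_def diagm_mult_diagm using gamma_pos
    by (auto simp: diagm_def vec_eq_iff less_imp_le real_div_sqrt)
  have VV: "tV ** V = mat 1" "V ** tV = mat 1"
    using V unfolding orthogonal_matrix_def tV_def by auto
  have cancel: "\<And>Y::real^'n^'n. Y ** H ** R = Y" "\<And>Y::real^'n^'n. Y ** R ** H = Y"
    "\<And>Y::real^'n^'n. Y ** tV ** V = Y" "\<And>Y::real^'n^'n. Y ** V ** tV = Y"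
    "\<And>Y::real^'n^'n. Y ** G ** H = Y ** R" "\<And>Y::real^'n^'n. Y ** H ** G = Y ** R"
    by (simp_all add: matrix_mul_assoc[symmetric] HR VV GH)
  have Sig: "Sig = R ** V ** L ** tV ** R"
  proof -
    have "Sig = (R ** H) ** Sig ** (H ** R)" by (simp add: HR)
    also have "\<dots> = R ** (H ** Sig ** H) ** R"
      by (simp add: matrix_mul_assoc)
    also have "\<dots> = R ** (V ** L ** tV) ** R"
      by (simp add: eig L_def tV_def)
    finally show ?thesis by (simp add: matrix_mul_assoc)
  qed
  define Z where "Z = tV ** R ** X ** R ** V"
  have X: "X = H ** V ** Z ** tV ** H"
    unfolding Z_def by (simp add: matrix_mul_assoc cancel VV HR)
  have "tV ** H ** C ** H ** V = L ** Z + Z ** L"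
    unfolding C Sig Z_def G_def[symmetric]
    by (simp add: matrix_add_ldistrib matrix_add_rdistrib matrix_mul_assoc cancel VV)
  then have "Z $ a $ b = (tV ** H ** C ** H ** V) $ a $ b / (lam $ a + lam $ b)" for a b
    using lam_pos[of a] lam_pos[of b] unfolding L_def
    by (intro diagm_lyapunov_solution) auto
  then have "Z = (\<chi> a b. (tV ** H ** C ** H ** V) $ a $ b / (lam $ a + lam $ b))"
    by (simp add: vec_eq_iff)
  with X show ?thesis by (simp add: tV_def)
qed

lemma column_matrix_congruence:
  fixes V :: "real^'n^'n"
  shows "transpose V ** diagm h ** (\<chi> r c. if c = k then w $ r else 0) ** diagm h ** V
    = h $ k *\<^sub>R (\<chi> a b. (transpose V *v (diagm h *v w)) $ a * V $ k $ b)"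
  by (simp add: vec_eq_iff matrix_matrix_mult_def matrix_vector_mult_def transpose_def diagm_def
      if_distrib if_distribR sum_distrib_left sum_distrib_right mult_ac cong: if_cong)
     (subst sum.swap, simp)

lemma symmetrized_column_matrix_congruence:
  fixes V :: "real^'n^'n" and h w :: "real^'n" and k :: 'n
  defines "D \<equiv> \<chi> r c. if c = k then w $ r else 0"
    and "u \<equiv> transpose V *v (diagm h *v w)"
  shows "transpose V ** diagm h ** ((1/2) *\<^sub>R (D + transpose D)) ** diagm h ** V
    = (h $ k / 2) *\<^sub>R (\<chi> a b. u $ a * V $ k $ b + V $ k $ a * u $ b)"
proof -
  have D: "transpose V ** diagm h ** D ** diagm h ** V = h $ k *\<^sub>R (\<chi> a b. u $ a * V $ k $ b)"
    unfolding D_def u_def by (rule column_matrix_congruence)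
  then have "transpose V ** diagm h ** transpose D ** diagm h ** V
      = h $ k *\<^sub>R transpose (\<chi> a b. u $ a * V $ k $ b)"
    by (metis matrix_transpose_mul matrix_mul_assoc transpose_diagm transpose_transpose transpose_scalar)
  with D show ?thesis
    by (simp add: matrix_scalar_ac scalar_matrix_assoc[symmetric] matrix_add_ldistrib matrix_add_rdistrib
        vec_eq_iff transpose_def algebra_simps)
qed

lemma Amat_mult_vec:
  "Amat V lam k *v u
    = (\<chi> a b. (u $ a * V $ k $ b + V $ k $ a * u $ b) / (2 * (lam $ a + lam $ b))) *v row k V"
proof -
  have entry: "Amat V lam k $ a $ b * u $ b
      = V $ k $ a * V $ k $ b / (2 * (lam $ a + lam $ b)) * u $ b
        + (if a = b then (\<Sum>l\<in>UNIV. (V $ k $ l)^2 / (2 * (lam $ a + lam $ l))) * u $ a else 0)"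
    for a b
    by (cases "a = b") (simp_all add: Amat_def power2_eq_square distrib_right)
  then have "(\<Sum>b\<in>UNIV. Amat V lam k $ a $ b * u $ b)
      = (\<Sum>b\<in>UNIV. V $ k $ a * V $ k $ b / (2 * (lam $ a + lam $ b)) * u $ b)
        + (\<Sum>l\<in>UNIV. (V $ k $ l)^2 / (2 * (lam $ a + lam $ l))) * u $ a" for a
    by (simp add: sum.distrib)
  then show ?thesis
    by (simp add: vec_eq_iff matrix_vector_mult_def row_def distrib_left sum.distrib
        sum_distrib_left power2_eq_square add_divide_distrib mult_ac)
qed

lemma lyapunov_column_response:
  fixes Sig X V :: "real^'n^'n" and gamma lam w :: "real^'n" and k :: 'n
  defines "H \<equiv> diagm (\<chi> i. 1 / sqrt (gamma $ i))"
    and "D \<equiv> \<chi> r c. if c = k then w $ r else 0"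
  assumes gamma_pos: "\<And>i. gamma $ i > 0"
    and V: "orthogonal_matrix V"
    and lam_pos: "\<And>i. lam $ i > 0"
    and eig: "H ** Sig ** H = V ** diagm lam ** transpose V"
    and lyap: "D + transpose D = 2 *\<^sub>R (Sig ** X ** diagm gamma + diagm gamma ** X ** Sig)"
  shows "column k X = ((1 / gamma $ k) *\<^sub>R (H ** V ** Amat V lam k ** transpose V ** H)) *v w"
proof -
  define h where "h = (\<chi> i. 1 / sqrt (gamma $ i))"
  define u where "u = transpose V *v (H *v w)"
  define N where "N = (\<chi> a b. (u $ a * V $ k $ b + V $ k $ a * u $ b) / (2 * (lam $ a + lam $ b)))"
  have "X = H ** V ** (\<chi> a b. (transpose V ** H ** ((1/2) *\<^sub>R (D + transpose D)) ** H ** V) $ a $ b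
      / (lam $ a + lam $ b)) ** transpose V ** H"
    using lyap by (intro lyapunov_solution[OF gamma_pos V lam_pos eig[unfolded H_def], folded H_def]) simp
  also have "(\<chi> a b. (transpose V ** H ** ((1/2) *\<^sub>R (D + transpose D)) ** H ** V) $ a $ b
      / (lam $ a + lam $ b)) = h $ k *\<^sub>R N"
    unfolding H_def D_def h_def[symmetric] symmetrized_column_matrix_congruence
    by (simp add: N_def u_def H_def h_def vec_eq_iff)
  finally have X: "X = H ** V ** (h $ k *\<^sub>R N) ** transpose V ** H" .
  have "H *v axis k 1 = h $ k *\<^sub>R axis k 1"
    by (simp add: H_def h_def vec_eq_iff diagm_mult_vector_nth axis_def)
  then have ek: "transpose V *v (H *v axis k 1) = h $ k *\<^sub>R row k V"
    by (simp add: matrix_vector_mult_scaleR matrix_vector_mult_basis)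
  have hk: "h $ k * h $ k = 1 / gamma $ k"
    using gamma_pos[of k] by (simp add: h_def less_imp_le)
  have "column k X = H *v (V *v ((h $ k *\<^sub>R N) *v (h $ k *\<^sub>R row k V)))"
    unfolding matrix_vector_mult_basis[symmetric] X ek[symmetric]
    by (simp only: matrix_vector_mul_assoc matrix_mul_assoc)
  also have "\<dots> = H *v (V *v ((1 / gamma $ k) *\<^sub>R (Amat V lam k *v u)))"
    by (simp add: Amat_mult_vec N_def hk[symmetric] matrix_vector_mult_scaleR scaleR_matrix_vector_assoc)
  also have "\<dots> = ((1 / gamma $ k) *\<^sub>R (H ** V ** Amat V lam k ** transpose V ** H)) *v w"
    by (simp add: u_def matrix_vector_mul_assoc matrix_vector_mult_scaleR scaleR_matrix_vector_assoc
        matrix_mul_assoc matrix_scalar_ac scalar_matrix_assoc[symmetric])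
  finally show ?thesis .
qed

theorem mainTheorem2:
  fixes Sig M :: "real ^ 'n ^ 'n"
    and gamma :: "real ^ 'n"
    and k :: 'n
    and delta :: "'n \<Rightarrow> real ^ 'n"
    and W P W' P' V :: "real ^ 'n ^ 'n"
    and lam :: "real ^ 'n"
  assumes Sigma_sym: "transpose Sig = Sig"
    and Sigma_pd: "\<And>x. x \<noteq> 0 \<Longrightarrow> x \<bullet> (Sig *v x) > 0"
    and gamma_pos: "\<And>i. gamma $ i > 0"
    and stab0: "is_stable_point Sig gamma
                  (M + (\<chi> r c. if c = k then 0 else delta c $ r)) W P"
    and stab1: "is_stable_point Sig gamma
                  (M + (\<chi> r c. delta c $ r)) W' P'"
    and V_orth: "orthogonal_matrix V"
    and lam_pos: "\<And>i. lam $ i > 0"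
    and eig: "diagm (\<chi> i. 1 / sqrt (gamma $ i)) ** Sig ** diagm (\<chi> i. 1 / sqrt (gamma $ i))
              = V ** diagm lam ** transpose V"
  shows "column k W' = column k W +
           ((1 / gamma $ k) *\<^sub>R (diagm (\<chi> i. 1 / sqrt (gamma $ i)) ** V ** Amat V lam k
              ** transpose V ** diagm (\<chi> i. 1 / sqrt (gamma $ i)))) *v delta k"
  \<comment> \<open>\<open>Sigma_pd\<close> is unused: it already follows from \<open>eig\<close> and \<open>lam_pos\<close>.\<close>
proof -
  have "(M + (\<chi> r c. delta c $ r)) - (M + (\<chi> r c. if c = k then 0 else delta c $ r))
      = (\<chi> r c. if c = k then delta k $ r else 0)"
    by (simp add: vec_eq_iff)
  then have "column k (W' - W) = ((1 / gamma $ k) *\<^sub>R (diagm (\<chi> i. 1 / sqrt (gamma $ i)) ** V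
      ** Amat V lam k ** transpose V ** diagm (\<chi> i. 1 / sqrt (gamma $ i)))) *v delta k"
    using stable_point_difference[OF stab0 stab1 Sigma_sym]
    by (intro lyapunov_column_response[OF gamma_pos V_orth lam_pos eig]) simp
  then show ?thesis
    by (simp add: column_def vec_eq_iff diff_eq_eq add.commute)
qed

end
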